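(* Let $v$ be an aperiodic infinite word over $\{0,1\}$ such that $\Phi_{\mathbb{R}}(v)$ exists, and for $\ell\ge1$ let $u^{(\ell)}$ be its prefix of length $\ell$. Then $$\lim_{\ell\to\infty}C_{\mathbb{R}}(u^{(\ell)})=\Phi_{\mathbb{R}}(v).$$
   Context: For a finite $0$-$1$ word $u$ of length $\ell\ge1$ and height $h$ (number of $1$'s) with $1$'s at positions $d_0<\dots<d_{h-1}$, let $\varphi(u)=\sum_{i=0}^{h-1}3^{h-1-i}2^{d_i}$ and $C_{\mathbb{R}}(u)=\varphi(u)/(2^\ell-3^h)\in\mathbb{Q}$. For an infinite word $v$ with $1$'s at positions $d_0<d_1<\cdots$, $\Phi_{\mathbb{R}}(v)=-\sum_{i\ge0}2^{d_i}/3^{i+1}$, said to exist if the series converges in $\mathbb{R}$. *)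

theory Defs
  imports Complex_Main "HOL-Library.Infinite_Set"
begin

text \<open>Finite 0-1 words are lists of booleans (True = 1); infinite words are nat => bool.\<close>

definition ones_pos :: "bool list \<Rightarrow> nat list" where
  "ones_pos u = filter (\<lambda>i. u ! i) [0..<length u]"

definition height :: "bool list \<Rightarrow> nat" where
  "height u = length (ones_pos u)"

definition phi :: "bool list \<Rightarrow> nat" where
  "phi u = (\<Sum>i<height u. 3 ^ (height u - 1 - i) * 2 ^ (ones_pos u ! i))"

definition C_R :: "bool list \<Rightarrow> real" where
  "C_R u = real (phi u) / (2 ^ length u - 3 ^ height u)"

definition inf_ones :: "(nat \<Rightarrow> bool) \<Rightarrow> nat \<Rightarrow> nat" where
  "inf_ones v i = enumerate {n. v n} i"

definition Phi_R_exists :: "(nat \<Rightarrow> bool) \<Rightarrow> bool" where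
  "Phi_R_exists v = (finite {n. v n} \<or>
     summable (\<lambda>i. 2 ^ inf_ones v i / 3 ^ (i + 1) :: real))"

definition Phi_R :: "(nat \<Rightarrow> bool) \<Rightarrow> real" where
  "Phi_R v = (if finite {n. v n}
     then - (\<Sum>i<card {n. v n}. 2 ^ inf_ones v i / 3 ^ (i + 1))
     else - (\<Sum>i. 2 ^ inf_ones v i / 3 ^ (i + 1)))"

definition aperiodic :: "(nat \<Rightarrow> bool) \<Rightarrow> bool" where
  "aperiodic v = (\<not> (\<exists>p>0. \<exists>N. \<forall>n\<ge>N. v (n + p) = v n))"

definition prefix_word :: "(nat \<Rightarrow> bool) \<Rightarrow> nat \<Rightarrow> bool list" where
  "prefix_word v l = map v [0..<l]"

end

theory Submission
  imports Defs
begin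

text \<open>Let \<open>K\<close> be the number of 1's in the prefix of length \<open>\<ell>\<close> and \<open>S\<^sub>K\<close> the \<open>K\<close>-th partial
  sum of the series \<open>\<Sum> 2^d\<^sub>i / 3^(i+1)\<close>. The prefix has exactly the 1's \<open>d\<^sub>0 < \<dots> < d\<^sub>K\<^sub>-\<^sub>1\<close>,
  so \<open>\<phi> = 3^K S\<^sub>K\<close> and \<open>C\<^sub>\<real> = -S\<^sub>K / (1 - 2^\<ell>/3^K)\<close>. An aperiodic word has infinitely
  many 1's, hence \<open>K \<rightarrow> \<infinity>\<close> and \<open>S\<^sub>K \<rightarrow> -\<Phi>\<^sub>\<real>(v)\<close>. Finally \<open>d\<^sub>K \<ge> \<ell>\<close>, so \<open>2^\<ell>/3^K\<close> is at
  most three times the \<open>K\<close>-th term of the convergent series and tends to \<open>0\<close>.\<close>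

definition Phi_term :: "(nat \<Rightarrow> bool) \<Rightarrow> nat \<Rightarrow> real" where
  "Phi_term v i = 2 ^ inf_ones v i / 3 ^ (i + 1)"

lemma aperiodic_imp_infinite_ones:
  assumes "aperiodic v"
  shows "infinite {n. v n}"
proof
  assume "finite {n. v n}"
  then obtain N where "\<forall>n\<in>{n. v n}. n < N"
    using finite_nat_set_iff_bounded by blast
  then have "\<forall>n\<ge>N. v (n + 1) = v n" by force
  then show False using assms unfolding aperiodic_def by blast
qed

lemma filter_upt_eq_map_enumerate:
  assumes inf: "infinite {n. P n}"
  shows "\<exists>k. filter P [0..<l] = map (enumerate {n. P n}) [0..<k]
           \<and> (\<forall>i. enumerate {n. P n} i < l \<longleftrightarrow> i < k)"
proof (induction l)
  case 0
  then show ?case by auto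
next
  case (Suc l)
  let ?e = "enumerate {n. P n}"
  obtain k where k_filter: "filter P [0..<l] = map ?e [0..<k]"
    and k_less: "\<forall>i. ?e i < l \<longleftrightarrow> i < k" using Suc.IH by blast
  have mono: "?e i < ?e j \<longleftrightarrow> i < j" for i j
    using inf by simp
  show ?case
  proof (cases "P l")
    case False
    have "?e i < Suc l \<longleftrightarrow> i < k" for i
      using k_less enumerate_in_set[OF inf, of i] False by (metis less_Suc_eq mem_Collect_eq)
    then show ?thesis using k_filter False by auto
  next
    case True
    then obtain j where j: "?e j = l"
      using enumerate_Ex[OF inf, of l] by auto
    with k_less mono[of k j] have "j = k" by (metis less_irrefl nat_neq_iff)
    have "?e i < Suc l \<longleftrightarrow> i < Suc k" for i
      using k_less j \<open>j = k\<close> mono[of i k] mono[of k i] by (metis less_Suc_eq nat_neq_iff)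
    moreover have "filter P [0..<Suc l] = map ?e [0..<Suc k]"
      using k_filter True j \<open>j = k\<close> by simp
    ultimately show ?thesis by blast
  qed
qed

lemma ones_pos_prefix_word: "ones_pos (prefix_word v l) = filter v [0..<l]"
  unfolding ones_pos_def prefix_word_def by (rule filter_cong) auto

lemma ones_pos_prefix_word_infinite:
  assumes "infinite {n. v n}"
  shows "ones_pos (prefix_word v l) = map (inf_ones v) [0..<height (prefix_word v l)]"
    and "inf_ones v i < l \<longleftrightarrow> i < height (prefix_word v l)"
proof -
  obtain k where k_filter: "filter v [0..<l] = map (inf_ones v) [0..<k]"
    and k_less: "\<forall>i. inf_ones v i < l \<longleftrightarrow> i < k"
    using filter_upt_eq_map_enumerate[OF assms, of l] unfolding inf_ones_def by blast
  have "height (prefix_word v l) = k"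
    unfolding height_def ones_pos_prefix_word k_filter by simp
  then show "ones_pos (prefix_word v l) = map (inf_ones v) [0..<height (prefix_word v l)]"
    and "inf_ones v i < l \<longleftrightarrow> i < height (prefix_word v l)"
    using ones_pos_prefix_word k_filter k_less by simp_all
qed

lemma phi_prefix_word:
  fixes v :: "nat \<Rightarrow> bool" and l :: nat
  assumes "infinite {n. v n}"
  defines "K \<equiv> height (prefix_word v l)"
  shows "real (phi (prefix_word v l)) = 3 ^ K * (\<Sum>i<K. Phi_term v i)"
proof -
  have "real (phi (prefix_word v l)) = (\<Sum>i<K. 3 ^ (K - 1 - i) * 2 ^ inf_ones v i)"
    unfolding phi_def K_def[symmetric]
    using ones_pos_prefix_word_infinite(1)[OF assms(1), of l] by (simp add: K_def)
  also have "\<dots> = (\<Sum>i<K. 3 ^ K * Phi_term v i)"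
  proof (rule sum.cong)
    fix i assume "i \<in> {..<K}"
    then have "K = (K - 1 - i) + (i + 1)" by simp
    then have "(3::real) ^ K = 3 ^ (K - 1 - i) * 3 ^ (i + 1)"
      by (metis power_add)
    then show "(3::real) ^ (K - 1 - i) * 2 ^ inf_ones v i = 3 ^ K * Phi_term v i"
      unfolding Phi_term_def by simp
  qed simp
  finally show ?thesis by (simp add: sum_distrib_left)
qed

lemma C_R_prefix_word:
  fixes v :: "nat \<Rightarrow> bool" and l :: nat
  assumes "infinite {n. v n}"
  defines "K \<equiv> height (prefix_word v l)"
  shows "C_R (prefix_word v l) = - (\<Sum>i<K. Phi_term v i) / (1 - 2 ^ l / 3 ^ K)"
proof -
  have "length (prefix_word v l) = l" by (simp add: prefix_word_def)
  then have "C_R (prefix_word v l) = 3 ^ K * (\<Sum>i<K. Phi_term v i) / (3 ^ K * (2 ^ l / 3 ^ K - 1))"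
    unfolding C_R_def phi_prefix_word[OF assms(1)] K_def by (simp add: algebra_simps)
  then show ?thesis by (simp add: minus_divide_right)
qed

lemma height_prefix_word_tendsto:
  assumes "infinite {n. v n}"
  shows "filterlim (\<lambda>l. height (prefix_word v l)) at_top sequentially"
  unfolding filterlim_at_top eventually_sequentially
  using ones_pos_prefix_word_infinite(2)[OF assms]
  by (metis le_less_Suc_eq less_Suc_eq nat_le_linear not_less_eq)

lemma two_pow_div_three_pow_height_le:
  fixes v :: "nat \<Rightarrow> bool" and l :: nat
  assumes "infinite {n. v n}"
  defines "K \<equiv> height (prefix_word v l)"
  shows "2 ^ l / 3 ^ K \<le> 3 * Phi_term v K"
proof -
  have "l \<le> inf_ones v K"
    using ones_pos_prefix_word_infinite(2)[OF assms(1), of K l] by (simp add: K_def)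
  then have "(2::real) ^ l / 3 ^ K \<le> 2 ^ inf_ones v K / 3 ^ K"
    by (simp add: divide_right_mono)
  then show ?thesis unfolding Phi_term_def by simp
qed

theorem lemma32:
  fixes v :: "nat \<Rightarrow> bool"
  assumes "aperiodic v" and "Phi_R_exists v"
  shows "(\<lambda>l. C_R (prefix_word v l)) \<longlonglongrightarrow> Phi_R v"
proof -
  have inf: "infinite {n. v n}" using aperiodic_imp_infinite_ones[OF assms(1)] .
  define K where "K l = height (prefix_word v l)" for l
  have summ: "summable (Phi_term v)"
    using assms(2) inf unfolding Phi_R_exists_def Phi_term_def by simp
  have K_lim: "filterlim K at_top sequentially"
    unfolding K_def using height_prefix_word_tendsto[OF inf] .
  have S_lim: "(\<lambda>l. \<Sum>i<K l. Phi_term v i) \<longlonglongrightarrow> suminf (Phi_term v)"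
    using filterlim_compose[OF summable_LIMSEQ[OF summ] K_lim] by simp
  have bound_lim: "(\<lambda>l. 3 * Phi_term v (K l)) \<longlonglongrightarrow> 0"
    using tendsto_mult_right_zero[OF filterlim_compose[OF summable_LIMSEQ_zero[OF summ] K_lim]]
    by simp
  have ratio_le: "\<forall>\<^sub>F l in sequentially. 2 ^ l / 3 ^ K l \<le> 3 * Phi_term v (K l)"
    unfolding K_def using two_pow_div_three_pow_height_le[OF inf] by simp
  have ratio_nonneg: "\<forall>\<^sub>F l in sequentially. 0 \<le> (2::real) ^ l / 3 ^ K l"
    by simp
  have ratio_lim: "(\<lambda>l. 2 ^ l / 3 ^ K l :: real) \<longlonglongrightarrow> 0"
    using tendsto_sandwich[OF ratio_nonneg ratio_le tendsto_const bound_lim] .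
  have "(\<lambda>l. - (\<Sum>i<K l. Phi_term v i) / (1 - 2 ^ l / 3 ^ K l)) \<longlonglongrightarrow> - suminf (Phi_term v) / (1 - 0)"
    by (intro tendsto_intros S_lim ratio_lim) simp
  moreover have "Phi_R v = - suminf (Phi_term v)"
    using inf unfolding Phi_R_def Phi_term_def by simp
  ultimately show ?thesis
    unfolding K_def C_R_prefix_word[OF inf] by simp
qed

end
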